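(* Under the standing assumptions below, for all $c,d,e\in I$ and $k\in\{0,\dots,n\}$: if $c\prec_k d$, $c\prec_k e$ and $d\prec e$, then $d\prec_k e$.
   Context: Standing assumptions: $I$ is a finite set of weighted constraints with default values on a finite domain $D$ such that distinct constraints have distinct variable sets, $\mathcal H(I)=(\mathrm{var}(I),\{\mathrm{var}(c)\mid c\in I\})$ is $\beta$-acyclic, and $(x_1,\dots,x_n)$ is a $\beta$-elimination order of $\mathcal H(I)$ (an enumeration of $\mathrm{var}(I)$ such that for each $k$, $x_{k+1}$ is a nest point—the edges containing it are totally ordered by inclusion—of the hypergraph with vertices $\mathrm{var}(I)\setminus X_k$ and edges $\{e\setminus X_k\}\setminus\{\emptyset\}$). $X_k=\{x_1,\dots,x_k\}$. For $c,d\in I$: $c\prec d$ iff there is $k$ with $\mathrm{var}(c)\setminus X_k\subsetneq\mathrm{var}(d)\setminus X_k$; $c\preceq d$ iff $c\prec d$ or $c=d$. Relations $\prec_k$ are defined inductively: $\prec_0=\emptyset$; $c\prec_{k+1}d$ iff $c\prec_k d$ or there is $e\in I$ with $c\preceq_k e\prec d$ and $x_{k+1}\in\mathrm{var}(d)\cap\mathrm{var}(e)$; here $c\preceq_k d$ iff $c=d$ or $c\prec_k d$. *)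

theory Defs
  imports Main
begin

text \<open>Constraints are abstracted to a type 'c together with a scope function
  var :: 'c \<Rightarrow> 'v set; only the scopes matter for the relations below.\<close>

definition var_set :: "'c set \<Rightarrow> ('c \<Rightarrow> 'v set) \<Rightarrow> 'v set" where
  "var_set I var = (\<Union>c\<in>I. var c)"

definition hyp_edges :: "'c set \<Rightarrow> ('c \<Rightarrow> 'v set) \<Rightarrow> 'v set set" where
  "hyp_edges I var = var ` I"

definition Xk :: "'v list \<Rightarrow> nat \<Rightarrow> 'v set" where
  "Xk xs k = set (take k xs)"

definition nest_point :: "'v set set \<Rightarrow> 'v \<Rightarrow> bool" where
  "nest_point E x \<longleftrightarrow> (\<forall>e\<in>E. \<forall>f\<in>E. x \<in> e \<and> x \<in> f \<longrightarrow> e \<subseteq> f \<or> f \<subseteq> e)"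

definition reduced_edges :: "'v set set \<Rightarrow> 'v set \<Rightarrow> 'v set set" where
  "reduced_edges E X = (\<lambda>e. e - X) ` E - {{}}"

definition beta_elim_order :: "'c set \<Rightarrow> ('c \<Rightarrow> 'v set) \<Rightarrow> 'v list \<Rightarrow> bool" where
  "beta_elim_order I var xs \<longleftrightarrow>
     distinct xs \<and> set xs = var_set I var \<and>
     (\<forall>k < length xs. xs ! k \<in> var_set I var - Xk xs k \<and>
        nest_point (reduced_edges (hyp_edges I var) (Xk xs k)) (xs ! k))"

definition beta_acyclic :: "'c set \<Rightarrow> ('c \<Rightarrow> 'v set) \<Rightarrow> bool" where
  "beta_acyclic I var \<longleftrightarrow> (\<exists>xs. beta_elim_order I var xs)"

definition prec :: "('c \<Rightarrow> 'v set) \<Rightarrow> 'v list \<Rightarrow> 'c \<Rightarrow> 'c \<Rightarrow> bool" where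
  "prec var xs c d \<longleftrightarrow> (\<exists>k. var c - Xk xs k \<subset> var d - Xk xs k)"

text \<open>c \<prec>_k d (x_{k+1} = xs ! k)\<close>
fun precK :: "'c set \<Rightarrow> ('c \<Rightarrow> 'v set) \<Rightarrow> 'v list \<Rightarrow> nat \<Rightarrow> 'c \<Rightarrow> 'c \<Rightarrow> bool" where
  "precK I var xs 0 c d = False"
| "precK I var xs (Suc k) c d =
     (precK I var xs k c d \<or>
      (\<exists>e\<in>I. (c = e \<or> precK I var xs k c e) \<and> prec var xs e d \<and>
              xs ! k \<in> var d \<inter> var e))"

end

theory Submission
  imports Defs
begin

(* Write S_k(c) = var c - X_k for the scope of c after eliminating X_k.
   Two facts about the elimination order drive everything:
   (1) the relation c \<prec> d is total on distinct constraints
       (distinct constraints have distinct scopes, and the scopes eventually vanish),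
       and it has no cycles of length two or three;
   (2) c \<prec>_k d implies S_k(c) \<subseteq> S_k(d), because x_{k+1} is a nest point of the
       reduced hypergraph, so the step e \<prec> d through x_{k+1} shrinks scopes at stage k.
   The theorem is proved by induction on k for all c, d, e at once.  In the step,
   c \<prec>_{k+1} d and c \<prec>_{k+1} e each hold either already at stage k or via a new
   step through x_{k+1}.  If both are old the induction hypothesis applies; if both are
   new, x_{k+1} lies in the scopes of d and e, so d \<prec>_{k+1} e directly.  The two mixed
   cases combine totality and acyclicity of \<prec> with the induction hypothesis and (2). *)

lemma Xk_mono: "k \<le> k' \<Longrightarrow> Xk xs k \<subseteq> Xk xs k'"
  by (simp add: Xk_def set_take_subset_set_take)

text \<open>Once the scope A is strictly inside B at some stage, it stays inside at later stages
  and B is never inside A at earlier stages; this yields acyclicity of \<prec>.\<close>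

lemma strict_scope_later:
  "A - Xk xs i \<subset> B - Xk xs i \<Longrightarrow> i \<le> j \<Longrightarrow> A - Xk xs j \<subseteq> B - Xk xs j"
  using Xk_mono[of i j xs] by blast

lemma strict_scope_earlier:
  "A - Xk xs i \<subset> B - Xk xs i \<Longrightarrow> j \<le> i \<Longrightarrow> \<not> B - Xk xs j \<subseteq> A - Xk xs j"
  using Xk_mono[of j i xs] by blast

lemma prec_asym: "prec var xs f g \<Longrightarrow> \<not> prec var xs g f"
  unfolding prec_def
  by (metis nat_le_linear strict_scope_earlier strict_scope_later)

lemma prec_no_3cycle: "prec var xs f g \<Longrightarrow> prec var xs g h \<Longrightarrow> \<not> prec var xs h f"
proof
  assume "prec var xs f g" "prec var xs g h" "prec var xs h f"
  then obtain i j l where i: "var f - Xk xs i \<subset> var g - Xk xs i"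
    and j: "var g - Xk xs j \<subset> var h - Xk xs j"
    and l: "var h - Xk xs l \<subset> var f - Xk xs l" unfolding prec_def by blast
  text \<open>At the largest of the three stages all three inclusions hold, one of them strictly.\<close>
  define m where "m = max i (max j l)"
  have "var f - Xk xs m \<subseteq> var g - Xk xs m" "var g - Xk xs m \<subseteq> var h - Xk xs m"
    "var h - Xk xs m \<subseteq> var f - Xk xs m"
    using strict_scope_later[OF i] strict_scope_later[OF j] strict_scope_later[OF l]
    by (simp_all add: m_def)
  moreover have "m = i \<or> m = j \<or> m = l" by (simp add: m_def max_def)
  ultimately show False using i j l by blast
qed

lemma precK_Suc_intro:
  "g \<in> I \<Longrightarrow> d = g \<or> precK I var xs k d g \<Longrightarrow> prec var xs g e \<Longrightarrow>
   xs ! k \<in> var e \<Longrightarrow> xs ! k \<in> var g \<Longrightarrow> precK I var xs (Suc k) d e"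
  by auto

lemma precK_SucE:
  assumes "precK I var xs (Suc k) c d"
  obtains "precK I var xs k c d"
  | g where "g \<in> I" "c = g \<or> precK I var xs k c g" "prec var xs g d"
      "xs ! k \<in> var d" "xs ! k \<in> var g"
  using assms by auto

locale beta_order =
  fixes I :: "'c set" and var :: "'c \<Rightarrow> 'v set" and xs :: "'v list"
  assumes elim: "beta_elim_order I var xs"
    and inj: "inj_on var I"
begin

lemma elim_step:
  assumes "k < length xs"
  shows "xs ! k \<notin> Xk xs k"
    and "nest_point (reduced_edges (hyp_edges I var) (Xk xs k)) (xs ! k)"
proof -
  have "\<forall>k < length xs. xs ! k \<in> var_set I var - Xk xs k \<and>
      nest_point (reduced_edges (hyp_edges I var) (Xk xs k)) (xs ! k)"
    using elim unfolding beta_elim_order_def by (elim conjE)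
  then have "xs ! k \<in> var_set I var - Xk xs k"
    and "nest_point (reduced_edges (hyp_edges I var) (Xk xs k)) (xs ! k)"
    using assms by blast+
  then show "xs ! k \<notin> Xk xs k"
    and "nest_point (reduced_edges (hyp_edges I var) (Xk xs k)) (xs ! k)" by blast+
qed

lemma scopes_comparable:
  assumes k: "k < length xs" and "f \<in> I" "d \<in> I" "xs ! k \<in> var f" "xs ! k \<in> var d"
  shows "var f - Xk xs k \<subseteq> var d - Xk xs k \<or> var d - Xk xs k \<subseteq> var f - Xk xs k"
proof -
  have fresh: "xs ! k \<notin> Xk xs k" using elim_step(1)[OF k] .
  have edge: "var g - Xk xs k \<in> reduced_edges (hyp_edges I var) (Xk xs k)"
    if "g \<in> I" "xs ! k \<in> var g" for g
    using that fresh unfolding reduced_edges_def hyp_edges_def by blast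
  have "xs ! k \<in> var f - Xk xs k" "xs ! k \<in> var d - Xk xs k" using assms fresh by blast+
  then show ?thesis
    using elim_step(2)[OF k] edge[of f] edge[of d] assms unfolding nest_point_def by meson
qed

lemma prec_scope_subset:
  assumes k: "k < length xs" and "f \<in> I" "d \<in> I" "xs ! k \<in> var f" "xs ! k \<in> var d"
    and fd: "prec var xs f d"
  shows "var f - Xk xs k \<subseteq> var d - Xk xs k"
proof -
  obtain m where m: "var f - Xk xs m \<subset> var d - Xk xs m" using fd unfolding prec_def by blast
  show ?thesis
  proof (cases "k \<le> m")
    case True
    then show ?thesis
      using strict_scope_earlier[OF m True] scopes_comparable[OF assms(1-5)] by blast
  next
    case False
    then show ?thesis using strict_scope_later[OF m] by simp
  qed
qed

text \<open>\<prec> is total on distinct constraints: at the first stage where one scope is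
  contained in the other, the inclusion is strict unless both scopes coincide
  from the start, which injectivity excludes.\<close>

lemma prec_total:
  assumes "f \<in> I" "d \<in> I" "f \<noteq> d"
  shows "prec var xs f d \<or> prec var xs d f"
proof (rule ccontr)
  assume incomparable: "\<not> ?thesis"
  define A where "A = {m. var f - Xk xs m \<subseteq> var d - Xk xs m}"
  define B where "B = {m. var d - Xk xs m \<subseteq> var f - Xk xs m}"
  have "var g \<subseteq> Xk xs (length xs)" if "g \<in> I" for g
    using elim that unfolding beta_elim_order_def var_set_def Xk_def by auto
  then have end_AB: "length xs \<in> A" "length xs \<in> B"
    using assms(1,2) unfolding A_def B_def by blast+
  define a where "a = (LEAST m. m \<in> A)"
  have aA: "a \<in> A" and a_least: "\<And>m. m \<in> A \<Longrightarrow> a \<le> m"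
    unfolding a_def using end_AB by (auto intro: LeastI Least_le)
  have aB: "a \<in> B"
    using aA incomparable unfolding A_def B_def prec_def by blast
  have a_leastB: "a \<le> m" if "m \<in> B" for m
  proof (rule ccontr)
    assume "\<not> a \<le> m"
    then have "m \<notin> A" using a_least by fastforce
    then show False using that incomparable unfolding A_def B_def prec_def by blast
  qed
  show False
  proof (cases a)
    case 0
    then have "var f = var d" using aA aB unfolding A_def B_def Xk_def by auto
    then show False using inj assms unfolding inj_on_def by blast
  next
    case (Suc m)
    have "m < length xs" using a_least[OF end_AB(1)] Suc by simp
    then have X_a: "Xk xs a = insert (xs ! m) (Xk xs m)"
      using Suc unfolding Xk_def by (simp add: take_Suc_conv_app_nth)
    have "m \<notin> A" "m \<notin> B" using a_least a_leastB Suc by fastforce+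
    then obtain y z where "y \<in> var f" "y \<notin> Xk xs m" "y \<notin> var d"
      and "z \<in> var d" "z \<notin> Xk xs m" "z \<notin> var f"
      unfolding A_def B_def by blast
    moreover from this have "y = xs ! m" "z = xs ! m"
      using aA aB X_a unfolding A_def B_def by blast+
    ultimately show False by simp
  qed
qed

lemma precK_scope_subset:
  "k \<le> length xs \<Longrightarrow> precK I var xs k c d \<Longrightarrow> d \<in> I
    \<Longrightarrow> var c - Xk xs k \<subseteq> var d - Xk xs k"
proof (induction k arbitrary: d)
  case 0
  then show ?case by simp
next
  case (Suc k)
  have stage: "Xk xs k \<subseteq> Xk xs (Suc k)" by (rule Xk_mono) simp
  from Suc.prems(2) show ?case
  proof (cases rule: precK_SucE)
    case 1
    then show ?thesis using Suc stage by fastforce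
  next
    case (2 g)
    have "var g - Xk xs k \<subseteq> var d - Xk xs k"
      using prec_scope_subset[of k g d] 2 Suc.prems by simp
    moreover have "var c - Xk xs k \<subseteq> var g - Xk xs k"
      using 2 Suc.IH[of g] Suc.prems(1) by auto
    ultimately show ?thesis using stage by blast
  qed
qed

lemma precK_next_var:
  "k < length xs \<Longrightarrow> precK I var xs k c d \<Longrightarrow> d \<in> I \<Longrightarrow> xs ! k \<in> var c \<Longrightarrow> xs ! k \<in> var d"
  using precK_scope_subset[of k c d] elim_step(1)[of k] by auto

lemma precK_Suc_direct:
  "d \<in> I \<Longrightarrow> prec var xs d e \<Longrightarrow> xs ! k \<in> var d \<Longrightarrow> xs ! k \<in> var e
    \<Longrightarrow> precK I var xs (Suc k) d e"
  using precK_Suc_intro[of d I d var xs k e] by blast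

definition successors_ordered :: "nat \<Rightarrow> bool" where
  "successors_ordered k \<longleftrightarrow> (\<forall>c\<in>I. \<forall>d\<in>I. \<forall>e\<in>I.
     precK I var xs k c d \<longrightarrow> precK I var xs k c e \<longrightarrow> prec var xs d e \<longrightarrow> precK I var xs k d e)"

lemma successors_ordered_refl:
  assumes "successors_ordered k" "c \<in> I" "d \<in> I" "e \<in> I"
    and "c = d \<or> precK I var xs k c d" "precK I var xs k c e" "prec var xs d e"
  shows "precK I var xs k d e"
  using assms unfolding successors_ordered_def by blast

text \<open>Mixed case 1: c \<prec>_k e, while c \<prec>_{k+1} d arises from a new step g \<prec> d through
  x_{k+1}.  Then g \<prec> e (g \<prec> e \<prec> g would be a 3-cycle), so g \<prec>_k e by induction and
  x_{k+1} passes from g to e.\<close>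

lemma step_new_left:
  assumes IH: "successors_ordered k" and k: "k < length xs"
    and "c \<in> I" "d \<in> I" "e \<in> I" "g \<in> I"
    and "precK I var xs k c e" "c = g \<or> precK I var xs k c g"
    and gd: "prec var xs g d" and de: "prec var xs d e"
    and "xs ! k \<in> var d" and xg: "xs ! k \<in> var g"
  shows "precK I var xs (Suc k) d e"
proof -
  have "g \<noteq> e" using gd de prec_asym by metis
  moreover have "\<not> prec var xs e g" using prec_no_3cycle[OF gd de] .
  ultimately have "prec var xs g e" using prec_total[of g e] assms by blast
  then have "precK I var xs k g e" using successors_ordered_refl[OF IH] assms by blast
  then have "xs ! k \<in> var e" using precK_next_var[OF k] xg assms by blast
  then show ?thesis using precK_Suc_direct assms by blast
qed

text \<open>Mixed case 2: c \<prec>_k d, while c \<prec>_{k+1} e arises from a new step f \<prec> e through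
  x_{k+1}.  Either d \<preceq>_k f, and the same step f \<prec> e gives d \<prec>_{k+1} e; or
  x_{k+1} reaches the scope of d from c or from f.\<close>

lemma step_new_right:
  assumes IH: "successors_ordered k" and k: "k < length xs"
    and "c \<in> I" "d \<in> I" "e \<in> I" "f \<in> I"
    and cd: "precK I var xs k c d" and cf: "c = f \<or> precK I var xs k c f"
    and "prec var xs f e" "prec var xs d e"
    and "xs ! k \<in> var e" and xf: "xs ! k \<in> var f"
  shows "precK I var xs (Suc k) d e"
proof (cases "c = f")
  case True
  then have "xs ! k \<in> var d" using precK_next_var[OF k cd] xf assms by blast
  then show ?thesis using precK_Suc_direct assms by blast
next
  case False
  then have cf_strict: "precK I var xs k c f" using cf by blast
  consider "d = f" | "prec var xs d f" | "prec var xs f d"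
    using prec_total[of d f] assms by blast
  then show ?thesis
  proof cases
    case 1
    then show ?thesis using precK_Suc_intro[of f I d var xs k e] assms by blast
  next
    case 2
    then have "precK I var xs k d f" using IH cd cf_strict assms unfolding successors_ordered_def by blast
    then show ?thesis using precK_Suc_intro[of f I d var xs k e] assms by blast
  next
    case 3
    then have "precK I var xs k f d" using IH cd cf_strict assms unfolding successors_ordered_def by blast
    then have "xs ! k \<in> var d" using precK_next_var[OF k] xf assms by blast
    then show ?thesis using precK_Suc_direct assms by blast
  qed
qed

lemma successors_ordered_Suc:
  assumes IH: "successors_ordered k" and k: "k < length xs"
  shows "successors_ordered (Suc k)"
  unfolding successors_ordered_def
proof (intro ballI impI)
  fix c d e
  assume c: "c \<in> I" and d: "d \<in> I" and e: "e \<in> I" and de: "prec var xs d e"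
    and cd: "precK I var xs (Suc k) c d" and ce: "precK I var xs (Suc k) c e"
  from ce show "precK I var xs (Suc k) d e"
  proof (cases rule: precK_SucE)
    case old_e: 1
    from cd show ?thesis
    proof (cases rule: precK_SucE)
      case old_d: 1
      have "precK I var xs k d e"
        using successors_ordered_refl[OF IH c d e _ old_e de] old_d by blast
      then show ?thesis by simp
    next
      case (2 g)
      then show ?thesis using step_new_left[OF IH k c d e _ old_e _ _ de] by blast
    qed
  next
    case new_e: (2 f)
    from cd show ?thesis
    proof (cases rule: precK_SucE)
      case old_d: 1
      show ?thesis using step_new_right[OF IH k c d e _ old_d _ _ de] new_e by blast
    next
      case (2 g)
      show ?thesis using precK_Suc_direct[OF d de] 2 new_e by blast
    qed
  qed
qed

lemma successors_ordered_upto: "k \<le> length xs \<Longrightarrow> successors_ordered k"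
proof (induction k)
  case 0
  then show ?case by (simp add: successors_ordered_def)
next
  case (Suc k)
  then show ?case using successors_ordered_Suc by simp
qed

end

theorem lemma6:
  fixes I :: "'c set" and var :: "'c \<Rightarrow> 'v set" and xs :: "'v list"
  assumes "finite I"
    and "\<And>c. c \<in> I \<Longrightarrow> finite (var c)"
    and "inj_on var I"
    and "beta_acyclic I var"
    and "beta_elim_order I var xs"
    and "c \<in> I" and "d \<in> I" and "e \<in> I"
    and "k \<le> length xs"
    and "precK I var xs k c d" and "precK I var xs k c e"
    and "prec var xs d e"
  shows "precK I var xs k d e"
proof -
  interpret beta_order I var xs
    using assms(3,5) by unfold_locales
  have "successors_ordered k" using successors_ordered_upto assms(9) .
  then show ?thesis using assms(6-12) unfolding successors_ordered_def by blast
qed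

end
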